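(* Let $d \ge 4$. Then \[ \tau_d \ge \frac{1}{(d+1)(s_d-1)^2}. \]
   Context: For $d \ge 1$, $\tau_d$ is the minimum of $\beta_1\beta_2\cdots\beta_d$ over all $(\beta_1,\dots,\beta_{d+1}) \in \mathbb{R}^{d+1}$ satisfying $\beta_1 \ge \cdots \ge \beta_{d+1} \ge 0$, $\beta_1+\cdots+\beta_{d+1}=1$, and, for every $t \in \{1,\dots,d\}$, $\prod_{i=1}^t (\beta_i - \beta_{d+1}) \le \sum_{j=t+1}^{d+1} (\beta_j - \beta_{d+1}) + (d+1)\beta_{d+1}$. The Sylvester sequence is defined by $s_1 := 2$ and $s_i := 1 + s_1 s_2 \cdots s_{i-1}$ for $i \ge 2$. *)

theory Defs
  imports "HOL-Analysis.Analysis"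
begin

(* Sylvester sequence: sylvester 1 = 2, sylvester i = 1 + prod_{j=1}^{i-1} sylvester j.
   Index 0 is unused (set to 1 by convention). *)
fun sylvester :: "nat \<Rightarrow> nat" where
  "sylvester 0 = 1"
| "sylvester (Suc 0) = 2"
| "sylvester (Suc (Suc n)) = 1 + (\<Prod>j\<in>{1..Suc n}. sylvester j)"

(* Feasible points beta_1..beta_{d+1}, encoded as beta : nat => real restricted to indices 1..d+1 *)
definition tau_feasible :: "nat \<Rightarrow> (nat \<Rightarrow> real) \<Rightarrow> bool" where
  "tau_feasible d \<beta> \<longleftrightarrow>
     (\<forall>i\<in>{1..d}. \<beta> i \<ge> \<beta> (Suc i)) \<and> \<beta> (d+1) \<ge> 0 \<and>
     (\<Sum>i=1..d+1. \<beta> i) = 1 \<and>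
     (\<forall>t\<in>{1..d}. (\<Prod>i=1..t. \<beta> i - \<beta> (d+1))
        \<le> (\<Sum>j=t+1..d+1. \<beta> j - \<beta> (d+1)) + real (d+1) * \<beta> (d+1))"

(* tau_d = min of beta_1 ... beta_d over feasible points (taken as infimum) *)
definition tau :: "nat \<Rightarrow> real" where
  "tau d = Inf ((\<lambda>\<beta>. \<Prod>i=1..d. \<beta> i) ` {\<beta>. tau_feasible d \<beta>})"

end

(*
  Write gamma for the last coordinate of a feasible point beta and alpha_i = beta_i - gamma
  for the excesses. Comparing the partial products of the alpha_i with those of the Sylvester
  reciprocals 1/s_i (log-majorization implies majorization), the constraints force each tail
  sum_{j>k} alpha_j + (d+1) gamma to be at least r_k = 1/(s_1...s_k) = 1 - sum_{i<=k} 1/s_i;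
  in particular gamma > 0. Taking q with r_{q+1} < (d+1) gamma <= r_q, the point with
  excesses 1/s_1, ..., 1/s_q, the remaining mass on coordinate q+1 and the same gamma has
  smaller tail sums than beta, hence a smaller product (Karamata). Its product
  r_q (r_q - d gamma) gamma^(d-q) is unimodal in gamma on the window, and at both ends it
  is at least r_{d-1}^2 gamma / (d+1) because s_{k+1} = 1 + s_1...s_k grows doubly
  exponentially.
*)
theory Submission
  imports Defs
begin

lemma obtain_last_index:
  fixes P :: "nat \<Rightarrow> bool"
  assumes "P 0"
  obtains s where "s \<le> k" "P s" "\<And>t. s < t \<Longrightarrow> t \<le> k \<Longrightarrow> \<not> P t"
proof -
  define S where "S = {s. s \<le> k \<and> P s}"
  have "finite S" "0 \<in> S"
    using assms by (auto simp: S_def)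
  then have "Max S \<in> S" "\<And>t. t \<in> S \<Longrightarrow> t \<le> Max S"
    by (auto intro: Max_in)
  then show ?thesis
    using that unfolding S_def by (metis (mono_tags, lifting) mem_Collect_eq not_le)
qed

lemma sum_atLeastAtMost_split:
  fixes f :: "nat \<Rightarrow> 'a::comm_monoid_add"
  assumes "m \<le> Suc s" "s \<le> t"
  shows "(\<Sum>i=m..t. f i) = (\<Sum>i=m..s. f i) + (\<Sum>i=Suc s..t. f i)"
  using sum.ub_add_nat[of m s f "t - s"] assms by simp

lemma prod_atLeastAtMost_split:
  fixes f :: "nat \<Rightarrow> 'a::comm_monoid_mult"
  assumes "m \<le> Suc s" "s \<le> t"
  shows "(\<Prod>i=m..t. f i) = (\<Prod>i=m..s. f i) * (\<Prod>i=Suc s..t. f i)"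
  using prod.ub_add_nat[of m s f "t - s"] assms by simp

lemma mult_ln_diff_le:
  fixes a b :: real
  assumes "0 < a" "0 < b"
  shows "b * (ln a - ln b) \<le> a - b"
proof -
  have "ln (a / b) \<le> a / b - 1"
    using assms by (intro ln_le_minus_one) simp
  then have "b * ln (a / b) \<le> b * (a / b - 1)"
    using assms(2) by (intro mult_left_mono) auto
  then show ?thesis
    using assms by (simp add: ln_divide_pos right_diff_distrib)
qed

lemma sum_antimono_weights_nonneg:
  fixes b L :: "nat \<Rightarrow> real"
  assumes "\<And>i. i \<in> {m..n} \<Longrightarrow> 0 \<le> b i"
    and "\<And>i j. m \<le> i \<Longrightarrow> i \<le> j \<Longrightarrow> j \<le> n \<Longrightarrow> b j \<le> b i"
    and "\<And>k. k \<in> {m..n} \<Longrightarrow> 0 \<le> (\<Sum>i=m..k. L i)"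
  shows "0 \<le> (\<Sum>i=m..n. b i * L i)"
  using assms
proof (induction n arbitrary: b)
  case 0
  then show ?case by (cases "m = 0") auto
next
  case (Suc n)
  show ?case
  proof (cases "m \<le> Suc n")
    case False
    then show ?thesis by simp
  next
    case True
    define c where "c i = b i - b (Suc n)" for i
    have "(\<Sum>i=m..Suc n. b i * L i) = (\<Sum>i=m..n. c i * L i) + b (Suc n) * (\<Sum>i=m..Suc n. L i)"
      using True by (simp add: c_def algebra_simps sum.distrib sum_distrib_left sum_subtractf)
    moreover have "0 \<le> (\<Sum>i=m..n. c i * L i)"
      by (rule Suc.IH) (use Suc.prems in \<open>auto simp: c_def\<close>)
    moreover have "0 \<le> b (Suc n) * (\<Sum>i=m..Suc n. L i)"
      using Suc.prems(1,3)[of "Suc n"] True by simp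
    ultimately show ?thesis by linarith
  qed
qed

lemma sum_mono_weights_nonneg:
  fixes w D :: "nat \<Rightarrow> real"
  assumes "\<And>i. i \<in> {m..n} \<Longrightarrow> 0 \<le> w i"
    and "\<And>i j. m \<le> i \<Longrightarrow> i \<le> j \<Longrightarrow> j \<le> n \<Longrightarrow> w i \<le> w j"
    and "\<And>k. k \<in> {m..n} \<Longrightarrow> 0 \<le> (\<Sum>i=k..n. D i)"
  shows "0 \<le> (\<Sum>i=m..n. w i * D i)"
  using assms
proof (induction "n - m" arbitrary: m w)
  case 0
  then show ?case by (cases "m = n") auto
next
  case (Suc x)
  then have mn: "m < n" by auto
  define c where "c i = w i - w m" for i
  have "(\<Sum>i=m..n. w i * D i) = (\<Sum>i=Suc m..n. c i * D i) + w m * (\<Sum>i=m..n. D i)"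
    using mn by (simp add: c_def algebra_simps sum.distrib sum_distrib_left sum_subtractf
        sum.atLeast_Suc_atMost)
  moreover have "0 \<le> (\<Sum>i=Suc m..n. c i * D i)"
    by (rule Suc.hyps(1)) (use Suc.hyps(2) Suc.prems in \<open>auto simp: c_def\<close>)
  moreover have "0 \<le> w m * (\<Sum>i=m..n. D i)"
    using Suc.prems(1,3)[of m] mn by simp
  ultimately show ?case by linarith
qed

text \<open>If the partial products of a decreasing positive sequence \<open>b\<close> are dominated by those
  of \<open>a\<close>, so is its sum: Abel summation against the weights \<open>b\<close> turns the logarithmic
  domination into \<open>\<Sum> b (ln a - ln b) \<ge> 0\<close>, and \<open>b (ln a - ln b) \<le> a - b\<close>.\<close>

lemma prefix_prod_le_imp_sum_le_pos:
  fixes a b :: "nat \<Rightarrow> real"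
  assumes pos: "\<And>i. i \<in> {m..n} \<Longrightarrow> 0 < a i \<and> 0 < b i"
    and dec: "\<And>i j. m \<le> i \<Longrightarrow> i \<le> j \<Longrightarrow> j \<le> n \<Longrightarrow> b j \<le> b i"
    and prefix: "\<And>k. k \<in> {m..n} \<Longrightarrow> (\<Prod>i=m..k. b i) \<le> (\<Prod>i=m..k. a i)"
  shows "(\<Sum>i=m..n. b i) \<le> (\<Sum>i=m..n. a i)"
proof -
  have "0 \<le> (\<Sum>i=m..n. b i * (ln (a i) - ln (b i)))"
  proof (rule sum_antimono_weights_nonneg)
    fix k assume k: "k \<in> {m..n}"
    have ab: "\<And>i. i \<in> {m..k} \<Longrightarrow> 0 < a i \<and> 0 < b i"
      using pos k by auto
    have "(\<Sum>i=m..k. ln (b i)) = ln (\<Prod>i=m..k. b i)"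
      using ab by (intro ln_prod[symmetric]) fastforce+
    also have "\<dots> \<le> ln (\<Prod>i=m..k. a i)"
      using prefix k ab by (subst ln_le_cancel_iff) (auto intro!: prod_pos)
    also have "\<dots> = (\<Sum>i=m..k. ln (a i))"
      using ab by (intro ln_prod) fastforce+
    finally show "0 \<le> (\<Sum>i=m..k. ln (a i) - ln (b i))"
      by (simp add: sum_subtractf)
  qed (use pos dec in force)+
  also have "\<dots> \<le> (\<Sum>i=m..n. a i - b i)"
    using pos by (intro sum_mono mult_ln_diff_le) auto
  finally show ?thesis by (simp add: sum_subtractf)
qed

lemma prefix_prod_le_imp_sum_le:
  fixes a b :: "nat \<Rightarrow> real"
  assumes "\<And>i. i \<in> {m..n} \<Longrightarrow> 0 < a i \<and> 0 \<le> b i"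
    and "\<And>i j. m \<le> i \<Longrightarrow> i \<le> j \<Longrightarrow> j \<le> n \<Longrightarrow> b j \<le> b i"
    and "\<And>k. k \<in> {m..n} \<Longrightarrow> (\<Prod>i=m..k. b i) \<le> (\<Prod>i=m..k. a i)"
  shows "(\<Sum>i=m..n. b i) \<le> (\<Sum>i=m..n. a i)"
  using assms
proof (induction n)
  case 0
  then show ?case by (cases "m = 0") auto
next
  case (Suc n)
  consider "Suc n < m" | "0 < b (Suc n)" | "m \<le> n" "b (Suc n) = 0" | "m = Suc n" "b (Suc n) = 0"
    using Suc.prems(1)[of "Suc n"] by force
  then show ?case
  proof cases
    case 2
    then show ?thesis
      using Suc.prems by (intro prefix_prod_le_imp_sum_le_pos) (auto intro: order.strict_trans2)
  next
    case 3
    have "(\<Sum>i=m..n. b i) \<le> (\<Sum>i=m..n. a i)"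
      by (rule Suc.IH) (use Suc.prems in auto)
    moreover have "0 < a (Suc n)"
      using Suc.prems(1) 3 by auto
    ultimately show ?thesis using 3 by simp
  qed (use Suc.prems(1) in force)+
qed

text \<open>Dually, domination of the suffix sums of a decreasing positive sequence \<open>z\<close> gives
  domination of the product, by Abel summation against the increasing weights \<open>1 / z\<close>.\<close>

lemma suffix_sum_le_imp_prod_le:
  fixes a z :: "nat \<Rightarrow> real"
  assumes pos: "\<And>i. i \<in> {m..n} \<Longrightarrow> 0 < a i \<and> 0 < z i"
    and dec: "\<And>i j. m \<le> i \<Longrightarrow> i \<le> j \<Longrightarrow> j \<le> n \<Longrightarrow> z j \<le> z i"
    and suffix: "\<And>k. k \<in> {m..n} \<Longrightarrow> (\<Sum>i=k..n. a i) \<le> (\<Sum>i=k..n. z i)"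
  shows "(\<Prod>i=m..n. a i) \<le> (\<Prod>i=m..n. z i)"
proof -
  have "0 \<le> (\<Sum>i=m..n. (1 / z i) * (z i - a i))"
  proof (rule sum_mono_weights_nonneg)
    fix i j assume "m \<le> i" "i \<le> j" "j \<le> n"
    then show "1 / z i \<le> 1 / z j"
      using dec pos by (simp add: frac_le)
  qed (use pos suffix in \<open>force simp: sum_subtractf\<close>)+
  also have "\<dots> \<le> (\<Sum>i=m..n. ln (z i) - ln (a i))"
  proof (rule sum_mono)
    fix i assume "i \<in> {m..n}"
    then have "z i * (ln (a i) - ln (z i)) \<le> a i - z i" "0 < z i"
      using pos by (auto intro: mult_ln_diff_le)
    then show "(1 / z i) * (z i - a i) \<le> ln (z i) - ln (a i)"
      by (simp add: field_simps)
  qed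
  also have "\<dots> = ln (\<Prod>i=m..n. z i) - ln (\<Prod>i=m..n. a i)"
  proof -
    have "ln (\<Prod>i=m..n. z i) = (\<Sum>i=m..n. ln (z i))" "ln (\<Prod>i=m..n. a i) = (\<Sum>i=m..n. ln (a i))"
      using pos by (intro ln_prod; fastforce)+
    then show ?thesis by (simp add: sum_subtractf)
  qed
  finally have "ln (\<Prod>i=m..n. a i) \<le> ln (\<Prod>i=m..n. z i)"
    by simp
  moreover have "0 < (\<Prod>i=m..n. a i)" "0 < (\<Prod>i=m..n. z i)"
    using pos by (auto intro!: prod_pos)
  ultimately show ?thesis by simp
qed

lemma linear_mult_power_ge_min_endpoints:
  fixes b k x1 x x2 :: real and e :: nat
  assumes e: "1 \<le> e" and k: "0 < k" and x: "0 < x1" "x1 \<le> x" "x \<le> x2"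
  shows "min ((b - k * x1) * x1 ^ e) ((b - k * x2) * x2 ^ e) \<le> (b - k * x) * x ^ e"
proof -
  define h where "h t = (b - k * t) * t ^ e" for t
  define h' where "h' t = t ^ (e - 1) * (real e * b - (real e + 1) * k * t)" for t
  have deriv: "(h has_real_derivative h' t) (at t)" for t
  proof -
    have "t ^ e = t ^ (e - 1) * t"
      using e by (metis Suc_diff_le diff_Suc_1 mult.commute power_Suc)
    then have "-k * t ^ e + (b - k * t) * (real e * t ^ (e - 1)) = h' t"
      unfolding h'_def by (simp add: algebra_simps)
    moreover have "(h has_real_derivative -k * t ^ e + (b - k * t) * (real e * t ^ (e - 1))) (at t)"
      unfolding h_def by (auto intro!: derivative_eq_intros)
    ultimately show ?thesis by simp
  qed
  text \<open>\<open>h\<close> increases up to \<open>e b / ((e + 1) k)\<close> and decreases afterwards.\<close>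
  define xmax where "xmax = real e * b / ((real e + 1) * k)"
  have xmax: "(real e + 1) * k * xmax = real e * b"
    using k by (simp add: xmax_def)
  show ?thesis
  proof (cases "x \<le> xmax")
    case True
    have "h x1 \<le> h x"
    proof (rule DERIV_nonneg_imp_nondecreasing[OF x(2)])
      fix t assume "x1 \<le> t" "t \<le> x"
      then have "(real e + 1) * k * t \<le> (real e + 1) * k * xmax"
        using True k by (intro mult_left_mono) auto
      then have "0 \<le> h' t"
        using \<open>x1 \<le> t\<close> x xmax unfolding h'_def by (intro mult_nonneg_nonneg) auto
      then show "\<exists>y. (h has_real_derivative y) (at t) \<and> 0 \<le> y"
        using deriv by blast
    qed
    then show ?thesis unfolding h_def by simp
  next
    case False
    have "(\<lambda>t. - h t) x \<le> (\<lambda>t. - h t) x2"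
    proof (rule DERIV_nonneg_imp_nondecreasing[OF x(3)])
      fix t assume "x \<le> t" "t \<le> x2"
      then have "(real e + 1) * k * xmax \<le> (real e + 1) * k * t"
        using False k by (intro mult_left_mono) auto
      then have "h' t \<le> 0"
        using \<open>x \<le> t\<close> x xmax unfolding h'_def by (intro mult_nonneg_nonpos) auto
      then show "\<exists>y. ((\<lambda>t. - h t) has_real_derivative y) (at t) \<and> 0 \<le> y"
        using deriv[THEN DERIV_minus] by fastforce
    qed
    then show ?thesis unfolding h_def by simp
  qed
qed

section \<open>The Sylvester sequence\<close>

lemma sylvester_ge_2: "1 \<le> j \<Longrightarrow> 2 \<le> sylvester j"
proof (induction j rule: less_induct)
  case (less j)
  show ?case
  proof (cases "j \<le> 1")
    case True
    then show ?thesis using less.prems by (simp add: le_Suc_eq)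
  next
    case False
    then obtain n where j: "j = Suc (Suc n)"
      by (metis One_nat_def not_less_eq_eq Suc_le_D)
    have "1 \<le> sylvester i" if "i \<in> {1..Suc n}" for i
      using less.IH[of i] that j by simp
    then have "1 \<le> (\<Prod>i\<in>{1..Suc n}. sylvester i)"
      by (intro prod_ge_1)
    then show ?thesis using j by simp
  qed
qed

definition sylvester_prod :: "nat \<Rightarrow> real" where
  "sylvester_prod k = (\<Prod>j=1..k. real (sylvester j))"

text \<open>\<open>sylvester_rem k = 1 - (\<Sum>i=1..k. 1 / s\<^sub>i)\<close>, see \<open>sylvester_rem_sum\<close>.\<close>

definition sylvester_rem :: "nat \<Rightarrow> real" where
  "sylvester_rem k = 1 / sylvester_prod k"

lemma sylvester_prod_ge_1: "1 \<le> sylvester_prod k"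
  unfolding sylvester_prod_def using sylvester_ge_2 by (intro prod_ge_1) force

lemma sylvester_prod_pos: "0 < sylvester_prod k"
  using sylvester_prod_ge_1[of k] by simp

lemma sylvester_Suc_eq: "real (sylvester (Suc k)) = 1 + sylvester_prod k"
  by (cases k) (simp_all add: sylvester_prod_def of_nat_prod)

lemma sylvester_prod_Suc: "sylvester_prod (Suc k) = sylvester_prod k * (1 + sylvester_prod k)"
  unfolding sylvester_prod_def by (simp add: prod.cl_ivl_Suc sylvester_Suc_eq[unfolded sylvester_prod_def])

lemma sylvester_prod_ge: "real k + 1 \<le> sylvester_prod k"
proof (induction k)
  case 0
  then show ?case by (simp add: sylvester_prod_def)
next
  case (Suc k)
  have "1 + sylvester_prod k \<le> sylvester_prod k * (1 + sylvester_prod k)"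
    using sylvester_prod_ge_1[of k] by (simp add: mult_le_cancel_right2)
  then show ?case
    unfolding sylvester_prod_Suc of_nat_Suc using Suc by linarith
qed

lemma sylvester_rem_pos: "0 < sylvester_rem k"
  using sylvester_prod_pos[of k] by (simp add: sylvester_rem_def)

lemma sylvester_rem_0: "sylvester_rem 0 = 1"
  by (simp add: sylvester_rem_def sylvester_prod_def)

lemma sylvester_rem_Suc: "sylvester_rem (Suc k) = sylvester_rem k - 1 / real (sylvester (Suc k))"
  using sylvester_prod_pos[of k]
  by (simp add: sylvester_rem_def sylvester_prod_Suc sylvester_Suc_eq field_simps)

lemma sylvester_rem_Suc_square: "sylvester_rem (Suc k) = sylvester_rem k ^ 2 / (1 + sylvester_rem k)"
  using sylvester_prod_pos[of k]
  by (simp add: sylvester_rem_def sylvester_prod_Suc field_simps power2_eq_square)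

lemma sylvester_rem_eq_prod: "sylvester_rem k = (\<Prod>j=1..k. 1 / real (sylvester j))"
  by (simp add: sylvester_rem_def sylvester_prod_def prod_dividef)

lemma sylvester_rem_prod_segment:
  "s \<le> t \<Longrightarrow> sylvester_rem t = sylvester_rem s * (\<Prod>i=Suc s..t. 1 / real (sylvester i))"
  unfolding sylvester_rem_eq_prod by (intro prod_atLeastAtMost_split) auto

lemma sylvester_rem_sum:
  "s \<le> t \<Longrightarrow> (\<Sum>i=Suc s..t. 1 / real (sylvester i)) = sylvester_rem s - sylvester_rem t"
  by (induction t rule: dec_induct) (simp_all add: sylvester_rem_Suc)

lemma sylvester_rem_mult_gap_ge:
  assumes "x \<le> sylvester_rem (Suc q)"
  shows "sylvester_rem (Suc q) \<le> sylvester_rem q * (sylvester_rem q - x)"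
proof -
  have pos: "0 < sylvester_rem q"
    by (rule sylvester_rem_pos)
  have "sylvester_rem (Suc q) = sylvester_rem q * (sylvester_rem q - sylvester_rem (Suc q))"
    using pos by (simp add: sylvester_rem_Suc_square field_simps power2_eq_square)
  also have "\<dots> \<le> sylvester_rem q * (sylvester_rem q - x)"
    using pos assms by (intro mult_left_mono) auto
  finally show ?thesis .
qed

lemma sylvester_prod_growth:
  assumes "2 \<le> m"
  shows "real (j + m + 1) * sylvester_prod j \<le> (1 + sylvester_prod j) ^ m"
proof -
  define x where "x = sylvester_prod j"
  have x: "real j + 1 \<le> x"
    unfolding x_def by (rule sylvester_prod_ge)
  have m: "1 \<le> real (m - 1)" "real (m - 1) = real m - 1"
    using assms by (auto simp: of_nat_diff)
  have "(1 + x) ^ m = (1 + x) * (1 + x) ^ (m - 1)"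
    using assms by (simp flip: power_Suc)
  also have "\<dots> \<ge> (1 + x) * (1 + real (m - 1) * x)"
    using x by (intro mult_left_mono Bernoulli_inequality) auto
  finally have "(1 + x) * (1 + real (m - 1) * x) \<le> (1 + x) ^ m" .
  moreover have "x \<le> real (m - 1) * x"
    using m(1) x by (simp add: mult_le_cancel_right1)
  then have "0 \<le> x * (real (m - 1) * x - real j - 1)"
    using x by (intro mult_nonneg_nonneg; linarith)
  moreover have "(1 + x) * (1 + real (m - 1) * x) = real (j + m + 1) * x + 1 + x * (real (m - 1) * x - real j - 1)"
    using m(2) by (simp add: algebra_simps)
  ultimately show ?thesis
    unfolding x_def by linarith
qed

lemma sylvester_prod_chain:
  "i \<le> n \<Longrightarrow> real (n + 2) ^ i * sylvester_prod (n - i) ^ (i + 2) \<le> sylvester_prod n ^ 2"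
proof (induction i)
  case 0
  then show ?case by (simp add: power2_eq_square)
next
  case (Suc i)
  define j where "j = n - Suc i"
  have j: "Suc j = n - i" "n + 2 = j + (i + 2) + 1"
    using Suc.prems by (auto simp: j_def)
  have "real (n + 2) ^ Suc i * sylvester_prod j ^ (Suc i + 2)
      = real (n + 2) ^ i * sylvester_prod j ^ (i + 2) * (real (n + 2) * sylvester_prod j)"
    by (simp add: algebra_simps)
  also have "\<dots> \<le> real (n + 2) ^ i * sylvester_prod j ^ (i + 2) * (1 + sylvester_prod j) ^ (i + 2)"
    unfolding j(2) using sylvester_prod_pos[of j]
    by (intro mult_left_mono sylvester_prod_growth) (auto simp: less_imp_le)
  also have "\<dots> = real (n + 2) ^ i * sylvester_prod (n - i) ^ (i + 2)"
    by (simp add: sylvester_prod_Suc power_mult_distrib flip: j(1))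
  also have "\<dots> \<le> sylvester_prod n ^ 2"
    using Suc by simp
  finally show ?case
    by (simp add: j_def)
qed

lemma sylvester_rem_chain:
  assumes "j \<le> n"
  shows "sylvester_rem n ^ 2 / real (n + 2) \<le> sylvester_rem j ^ (n - j + 2) / real (n + 2) ^ (n + 1 - j)"
proof -
  define N where "N = real (n + 2)"
  have "N ^ (n - j) * sylvester_prod j ^ (n - j + 2) \<le> sylvester_prod n ^ 2"
    using sylvester_prod_chain[of "n - j" n] assms by (simp add: N_def)
  then have "N ^ (n + 1 - j) * sylvester_prod j ^ (n - j + 2) \<le> N * sylvester_prod n ^ 2"
    using assms by (simp add: N_def Suc_diff_le mult.assoc)
  then have "1 / (N * sylvester_prod n ^ 2) \<le> 1 / (N ^ (n + 1 - j) * sylvester_prod j ^ (n - j + 2))"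
    by (intro frac_le) (auto simp: N_def sylvester_prod_pos)
  then show ?thesis
    by (simp add: N_def sylvester_rem_def power_one_over mult_ac)
qed

lemma sylvester_rem_window_right:
  assumes "q \<le> n"
  defines "x \<equiv> sylvester_rem q / real (n + 2)"
  shows "sylvester_rem n ^ 2 / real (n + 2)
    \<le> sylvester_rem q * ((sylvester_rem q - real (n + 1) * x) * x ^ (n - q))"
proof -
  have "sylvester_rem q - real (n + 1) * x = x"
    by (simp add: x_def field_simps)
  then have "sylvester_rem q * ((sylvester_rem q - real (n + 1) * x) * x ^ (n - q))
      = sylvester_rem q ^ (n - q + 2) / real (n + 2) ^ (n + 1 - q)"
    using assms(1) by (simp add: x_def Suc_diff_le power_divide)
  then show ?thesis
    using sylvester_rem_chain[OF assms(1)] by simp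
qed

lemma sylvester_rem_window_left:
  assumes "q < n"
  defines "x \<equiv> sylvester_rem (Suc q) / real (n + 2)"
  shows "sylvester_rem n ^ 2 / real (n + 2)
    \<le> sylvester_rem q * ((sylvester_rem q - real (n + 1) * x) * x ^ (n - q))"
proof -
  have "real (n + 1) * x \<le> sylvester_rem (Suc q)"
    using sylvester_rem_pos[of "Suc q"] by (simp add: x_def divide_le_eq)
  then have "sylvester_rem (Suc q) * x ^ (n - q)
      \<le> sylvester_rem q * (sylvester_rem q - real (n + 1) * x) * x ^ (n - q)"
    using sylvester_rem_pos[of "Suc q"]
    by (intro mult_right_mono sylvester_rem_mult_gap_ge) (auto simp: x_def)
  moreover have "sylvester_rem (Suc q) * x ^ (n - q)
      = sylvester_rem (Suc q) ^ (n - Suc q + 2) / real (n + 2) ^ (n + 1 - Suc q)"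
    using assms(1) by (simp add: x_def power_divide Suc_diff_Suc)
  ultimately show ?thesis
    using sylvester_rem_chain[of "Suc q" n] assms(1) by (simp add: mult.assoc)
qed

text \<open>The right-hand side is unimodal in \<open>g\<close>, so it suffices to check the two ends of the window.\<close>

lemma sylvester_rem_window_bound:
  fixes g :: real
  assumes q: "q \<le> n" and g: "0 < g" "real (n + 2) * g \<le> sylvester_rem q"
    and g_next: "q < n \<Longrightarrow> sylvester_rem (Suc q) < real (n + 2) * g"
  shows "sylvester_rem n ^ 2 / real (n + 2)
    \<le> sylvester_rem q * (sylvester_rem q - real (n + 1) * g) * g ^ (n - q)"
proof -
  define r where "r = sylvester_rem q"
  define f where "f x = (r - real (n + 1) * x) * x ^ (n - q)" for x
  define x2 where "x2 = r / real (n + 2)"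
  have r: "0 < r" and g_x2: "g \<le> x2"
    using g by (auto simp: r_def x2_def sylvester_rem_pos field_simps)
  have right: "sylvester_rem n ^ 2 / real (n + 2) \<le> r * f x2"
    using sylvester_rem_window_right[OF q] by (simp add: f_def r_def x2_def)
  have "r * f x2 \<le> r * f g \<or> sylvester_rem n ^ 2 / real (n + 2) \<le> r * f g"
  proof (cases "q = n")
    case True
    then show ?thesis
      using r g_x2 by (auto simp: f_def intro!: mult_left_mono)
  next
    case False
    define x1 where "x1 = sylvester_rem (Suc q) / real (n + 2)"
    have x1: "0 < x1" "x1 \<le> g"
      using g_next q False sylvester_rem_pos[of "Suc q"] by (auto simp: x1_def field_simps)
    have left: "sylvester_rem n ^ 2 / real (n + 2) \<le> r * f x1"
      using sylvester_rem_window_left[of q n] False q by (simp add: f_def r_def x1_def)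
    have "min (f x1) (f x2) \<le> f g"
      unfolding f_def using False q x1 g_x2
      by (intro linear_mult_power_ge_min_endpoints) auto
    then have "r * f x1 \<le> r * f g \<or> r * f x2 \<le> r * f g"
      using r by (auto simp: min_le_iff_disj intro: mult_left_mono)
    then show ?thesis
      using left by linarith
  qed
  then show ?thesis
    using right by (auto simp: f_def r_def mult.assoc)
qed

section \<open>Feasible points\<close>

locale feasible_point =
  fixes d :: nat and \<beta> :: "nat \<Rightarrow> real"
  assumes feasible: "tau_feasible d \<beta>"
begin

abbreviation \<gamma> :: real where "\<gamma> \<equiv> \<beta> (d + 1)"

abbreviation \<alpha> :: "nat \<Rightarrow> real" where "\<alpha> i \<equiv> \<beta> i - \<gamma>"

definition head_prod :: "nat \<Rightarrow> real" where
  "head_prod t = (\<Prod>i=1..t. \<alpha> i)"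

definition budget :: "nat \<Rightarrow> real" where
  "budget t = (\<Sum>j=t+1..d+1. \<alpha> j) + real (d + 1) * \<gamma>"

lemma beta_antimono:
  assumes "1 \<le> i" "i \<le> j" "j \<le> d + 1"
  shows "\<beta> j \<le> \<beta> i"
  using assms(2,3)
proof (induction j rule: dec_induct)
  case base
  then show ?case by simp
next
  case (step n)
  have "\<beta> (Suc n) \<le> \<beta> n"
    using feasible step.hyps(1) step.prems assms(1) unfolding tau_feasible_def by auto
  then show ?case
    using step by simp
qed

lemma excess_nonneg: "1 \<le> i \<Longrightarrow> i \<le> d + 1 \<Longrightarrow> 0 \<le> \<alpha> i"
  using beta_antimono[of i "d + 1"] by simp

lemma head_prod_le_budget: "t \<in> {1..d} \<Longrightarrow> head_prod t \<le> budget t"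
  using feasible by (simp add: tau_feasible_def head_prod_def budget_def)

lemma budget_split:
  assumes "s \<le> k" "k \<le> d + 1"
  shows "budget s = budget k + (\<Sum>i=Suc s..k. \<alpha> i)"
proof -
  have "(\<Sum>j=s+1..d+1. \<alpha> j) = (\<Sum>j=s+1..k. \<alpha> j) + (\<Sum>j=Suc k..d+1. \<alpha> j)"
    using assms by (intro sum_atLeastAtMost_split) auto
  then show ?thesis
    by (simp add: budget_def del: sum.cl_ivl_Suc)
qed

lemma budget_0: "budget 0 = 1"
  using feasible by (simp add: tau_feasible_def budget_def sum_subtractf del: sum.cl_ivl_Suc)

lemma budget_last: "budget d = real (d + 1) * \<gamma>"
  by (simp add: budget_def)

lemma budget_ge:
  assumes "k \<le> d"
  shows "real (d + 1) * \<gamma> \<le> budget k"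
proof -
  have "0 \<le> (\<Sum>i=Suc k..d. \<alpha> i)"
    using excess_nonneg by (intro sum_nonneg) auto
  then show ?thesis
    using budget_split[of k d] assms by (simp add: budget_last)
qed

lemma head_segment_prod_le:
  assumes st: "s \<le> t" "t \<le> d"
    and head: "sylvester_rem s \<le> head_prod s" "head_prod t < sylvester_rem t"
  shows "(\<Prod>i=Suc s..t. \<alpha> i) \<le> (\<Prod>i=Suc s..t. 1 / real (sylvester i))"
proof (rule ccontr)
  assume "\<not> ?thesis"
  then have "sylvester_rem t < sylvester_rem s * (\<Prod>i=Suc s..t. \<alpha> i)"
    using sylvester_rem_pos[of s] by (simp add: sylvester_rem_prod_segment[OF st(1)])
  also have "\<dots> \<le> head_prod s * (\<Prod>i=Suc s..t. \<alpha> i)"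
    using head(1) st excess_nonneg by (intro mult_right_mono prod_nonneg) auto
  also have "\<dots> = head_prod t"
    unfolding head_prod_def using st by (intro prod_atLeastAtMost_split[symmetric]) auto
  finally show False
    using head(2) by simp
qed

text \<open>Beyond the last index \<open>s \<le> k\<close> with \<open>sylvester_rem s \<le> head_prod s\<close>, the partial
  products of the excesses stay below those of the Sylvester reciprocals, hence so do their
  partial sums; these telescope to \<open>sylvester_rem s - sylvester_rem k\<close>, while
  \<open>sylvester_rem s \<le> budget s\<close> by feasibility.\<close>

lemma sylvester_rem_le_budget:
  assumes k: "k \<le> d"
  shows "sylvester_rem k \<le> budget k"
proof -
  have "sylvester_rem 0 \<le> head_prod 0"
    by (simp add: sylvester_rem_0 head_prod_def)
  then obtain s where s: "s \<le> k" "sylvester_rem s \<le> head_prod s"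
    and after: "\<And>t. s < t \<Longrightarrow> t \<le> k \<Longrightarrow> head_prod t < sylvester_rem t"
    by (rule obtain_last_index) (auto simp: not_le)
  have "sylvester_rem s \<le> budget s"
  proof (cases "s = 0")
    case True
    then show ?thesis by (simp add: budget_0 sylvester_rem_0)
  next
    case False
    then show ?thesis
      using s k head_prod_le_budget[of s] by simp
  qed
  moreover have "(\<Sum>i=Suc s..k. \<alpha> i) \<le> (\<Sum>i=Suc s..k. 1 / real (sylvester i))"
  proof (rule prefix_prod_le_imp_sum_le)
    fix i assume "i \<in> {Suc s..k}"
    then show "0 < 1 / real (sylvester i) \<and> 0 \<le> \<alpha> i"
      using k sylvester_ge_2[of i] excess_nonneg[of i] by auto
  next
    fix i j assume "Suc s \<le> i" "i \<le> j" "j \<le> k"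
    then show "\<alpha> j \<le> \<alpha> i"
      using k beta_antimono[of i j] by simp
  next
    fix t assume "t \<in> {Suc s..k}"
    then show "(\<Prod>i=Suc s..t. \<alpha> i) \<le> (\<Prod>i=Suc s..t. 1 / real (sylvester i))"
      using k s after[of t] by (intro head_segment_prod_le) auto
  qed
  ultimately show ?thesis
    using budget_split[of s k] sylvester_rem_sum[of s k] s k by simp
qed

lemma gamma_pos: "0 < \<gamma>"
proof -
  have "sylvester_rem d \<le> real (d + 1) * \<gamma>"
    using sylvester_rem_le_budget[of d] by (simp add: budget_last)
  then have "0 < real (d + 1) * \<gamma>"
    using sylvester_rem_pos[of d] by linarith
  then show ?thesis
    by (simp add: zero_less_mult_iff)
qed

lemma beta_suffix_sum: "k \<le> d \<Longrightarrow> (\<Sum>i=Suc k..d+1. \<beta> i) = budget k - real k * \<gamma>"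
  by (simp add: budget_def sum_subtractf of_nat_diff algebra_simps)

text \<open>The comparison point: same last coordinate \<open>\<gamma>\<close>, excesses equal to the Sylvester
  reciprocals up to index \<open>q\<close>, and the rest of the unit mass on coordinate \<open>q + 1\<close>.
  Its suffix sums are dominated by those of \<open>\<beta>\<close>, so its product is smaller.\<close>

definition extremal :: "nat \<Rightarrow> nat \<Rightarrow> real" where
  "extremal q i = (if i \<le> q then 1 / real (sylvester i) + \<gamma>
     else if i = Suc q then sylvester_rem q - real d * \<gamma> else \<gamma>)"

lemma extremal_pos:
  assumes "real (d + 1) * \<gamma> \<le> sylvester_rem q" "1 \<le> i"
  shows "0 < extremal q i"
  using assms gamma_pos sylvester_ge_2[of i]
  by (auto simp: extremal_def algebra_simps add_pos_pos)

lemma extremal_tail_sum: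
  assumes "q < k" "k \<le> d + 1"
  shows "(\<Sum>i=Suc k..d+1. extremal q i) = real (d + 1 - k) * \<gamma>"
proof -
  have "(\<Sum>i=Suc k..d+1. extremal q i) = (\<Sum>i=Suc k..d+1. \<gamma>)"
    using assms by (intro sum.cong) (auto simp: extremal_def)
  then show ?thesis by simp
qed

lemma extremal_head_sum:
  assumes "k \<le> q" "q \<le> d"
  shows "(\<Sum>i=Suc k..d+1. extremal q i) = sylvester_rem k - real k * \<gamma>"
  using assms(1)
proof (induction k rule: inc_induct)
  case base
  have "(\<Sum>i=Suc q..d+1. extremal q i) = extremal q (Suc q) + (\<Sum>i=Suc (Suc q)..d+1. extremal q i)"
    using assms by (intro sum.atLeast_Suc_atMost) simp
  then show ?case
    using assms extremal_tail_sum[of q "Suc q"] by (simp add: extremal_def of_nat_diff algebra_simps)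
next
  case (step k)
  have "(\<Sum>i=Suc k..d+1. extremal q i) = extremal q (Suc k) + (\<Sum>i=Suc (Suc k)..d+1. extremal q i)"
    using step assms by (intro sum.atLeast_Suc_atMost) simp
  then show ?case
    using step by (simp add: extremal_def sylvester_rem_Suc algebra_simps)
qed

lemma prod_extremal_le:
  assumes q: "q \<le> d" "real (d + 1) * \<gamma> \<le> sylvester_rem q"
  shows "(\<Prod>i=1..d+1. extremal q i) \<le> (\<Prod>i=1..d+1. \<beta> i)"
proof (rule suffix_sum_le_imp_prod_le)
  fix i assume "i \<in> {1..d+1}"
  then show "0 < extremal q i \<and> 0 < \<beta> i"
    using q extremal_pos beta_antimono[of i "d + 1"] gamma_pos by force
next
  fix i j assume "1 \<le> i" "i \<le> j" "j \<le> d + 1"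
  then show "\<beta> j \<le> \<beta> i"
    by (rule beta_antimono)
next
  fix k assume "k \<in> {1..d+1}"
  then obtain k' where k: "k = Suc k'" "k' \<le> d"
    by (cases k) auto
  show "(\<Sum>i=k..d+1. extremal q i) \<le> (\<Sum>i=k..d+1. \<beta> i)"
  proof (cases "k' \<le> q")
    case True
    then show ?thesis
      using k q sylvester_rem_le_budget[of k'] extremal_head_sum[of k' q] beta_suffix_sum[of k']
      by simp
  next
    case False
    then show ?thesis
      using k q budget_ge[of k'] extremal_tail_sum[of q k'] beta_suffix_sum[of k']
      by (simp add: of_nat_diff algebra_simps)
  qed
qed

lemma prod_extremal_ge:
  assumes q: "q \<le> d" "real (d + 1) * \<gamma> \<le> sylvester_rem q"
  shows "sylvester_rem q * (sylvester_rem q - real d * \<gamma>) * \<gamma> ^ (d - q)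
    \<le> (\<Prod>i=1..d+1. extremal q i)"
proof -
  have "sylvester_rem q = (\<Prod>i=1..q. 1 / real (sylvester i))"
    by (rule sylvester_rem_eq_prod)
  also have "\<dots> \<le> (\<Prod>i=1..q. extremal q i)"
    using gamma_pos by (intro prod_mono) (auto simp: extremal_def)
  finally have head: "sylvester_rem q \<le> (\<Prod>i=1..q. extremal q i)" .
  have "(\<Prod>i=Suc q..d+1. extremal q i) = extremal q (Suc q) * (\<Prod>i=Suc (Suc q)..d+1. extremal q i)"
    using q by (intro prod.atLeast_Suc_atMost) simp
  also have "\<dots> = (sylvester_rem q - real d * \<gamma>) * \<gamma> ^ (d - q)"
    by (simp add: extremal_def del: prod.cl_ivl_Suc)
  finally have tail: "(\<Prod>i=Suc q..d+1. extremal q i) = (sylvester_rem q - real d * \<gamma>) * \<gamma> ^ (d - q)" .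
  have "0 \<le> (sylvester_rem q - real d * \<gamma>) * \<gamma> ^ (d - q)"
    using q gamma_pos by (simp add: algebra_simps)
  then have "sylvester_rem q * ((sylvester_rem q - real d * \<gamma>) * \<gamma> ^ (d - q))
      \<le> (\<Prod>i=1..q. extremal q i) * (\<Prod>i=Suc q..d+1. extremal q i)"
    unfolding tail using head by (rule mult_right_mono[rotated])
  also have "\<dots> = (\<Prod>i=1..d+1. extremal q i)"
    using q by (intro prod_atLeastAtMost_split[symmetric]) auto
  finally show ?thesis
    by (simp add: mult.assoc)
qed

lemma sylvester_rem_bound:
  assumes "1 \<le> d"
  shows "sylvester_rem (d - 1) ^ 2 / real (d + 1) \<le> (\<Prod>i=1..d. \<beta> i)"
proof -
  obtain n where n: "d = Suc n"
    using assms by (cases d) auto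
  have "real (d + 1) * \<gamma> \<le> sylvester_rem 0"
    using budget_ge[of 0] by (simp add: budget_0 sylvester_rem_0)
  then obtain q where q: "q \<le> n" "real (d + 1) * \<gamma> \<le> sylvester_rem q"
    and q_next: "q < n \<Longrightarrow> sylvester_rem (Suc q) < real (d + 1) * \<gamma>"
    by (rule obtain_last_index[where k = n]) (auto simp: not_le)
  have "sylvester_rem q * (sylvester_rem q - real d * \<gamma>) * \<gamma> ^ (d - q) \<le> (\<Prod>i=1..d+1. \<beta> i)"
    using q n by (intro order_trans[OF prod_extremal_ge prod_extremal_le]) auto
  moreover have "\<gamma> ^ (d - q) = \<gamma> ^ (n - q) * \<gamma>"
    using q n by (simp add: Suc_diff_le)
  ultimately have "sylvester_rem q * (sylvester_rem q - real d * \<gamma>) * \<gamma> ^ (n - q) * \<gamma>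
      \<le> (\<Prod>i=1..d+1. \<beta> i)"
    by (simp add: mult.assoc)
  also have "\<dots> = (\<Prod>i=1..d. \<beta> i) * \<gamma>"
    by simp
  finally have "sylvester_rem q * (sylvester_rem q - real d * \<gamma>) * \<gamma> ^ (n - q) \<le> (\<Prod>i=1..d. \<beta> i)"
    using gamma_pos by simp
  moreover have "sylvester_rem n ^ 2 / real (n + 2)
      \<le> sylvester_rem q * (sylvester_rem q - real (n + 1) * \<gamma>) * \<gamma> ^ (n - q)"
    using q q_next gamma_pos n by (intro sylvester_rem_window_bound) auto
  ultimately show ?thesis
    using n by simp
qed

end

lemma tau_feasible_uniform: "tau_feasible d (\<lambda>_. 1 / real (d + 1))"
  by (auto simp: tau_feasible_def power_0_left)

theorem lemma4p1:
  fixes d :: nat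
  assumes "d \<ge> 4"
  shows "tau d \<ge> 1 / (real (d+1) * (real (sylvester d) - 1)^2)"
proof -
  have "real (sylvester d) - 1 = sylvester_prod (d - 1)"
    using sylvester_Suc_eq[of "d - 1"] assms by simp
  then have bound: "1 / (real (d+1) * (real (sylvester d) - 1)^2) = sylvester_rem (d - 1) ^ 2 / real (d + 1)"
    by (simp add: sylvester_rem_def power_one_over)
  have "sylvester_rem (d - 1) ^ 2 / real (d + 1) \<le> (\<Prod>i=1..d. \<beta> i)" if "tau_feasible d \<beta>" for \<beta>
  proof -
    interpret feasible_point d \<beta>
      using that by unfold_locales
    show ?thesis
      using assms by (intro sylvester_rem_bound) simp
  qed
  then show ?thesis
    unfolding tau_def bound using tau_feasible_uniform by (intro cInf_greatest) auto
qed

end
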